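(* For $x\in\mathbb{C}$ with $|x|<1$ and $2x\notin\mathbb{Z}$ (the value at $x=0$ understood by continuity), $$\sum_{k=2}^{\infty}\zeta(k)\,x^k=\frac{1}{2}-\frac{\pi x}{2}\cot(\pi x)-\pi x\int_0^1\left(\frac{\sin(2\pi x u)}{\sin(2\pi x)}-u\right)\cot(\pi u)\,du,$$ and the right-hand side gives the analytic continuation of the left-hand side to all $x$ with $2x\notin\mathbb{Z}$.
   Context: $\zeta$ is the Riemann zeta function. *)

theory Defs
  imports "HOL-Complex_Analysis.Complex_Analysis"
begin

text \<open>Riemann zeta function in its half-plane of absolute convergence Re s > 1,
  given by its Dirichlet series (only integer arguments k >= 2 are used).\<close>
definition zeta :: "complex \<Rightarrow> complex" where
  "zeta s = (\<Sum>n. 1 / (of_nat (Suc n)) powr s)"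

definition zeta_gen_rhs :: "complex \<Rightarrow> complex" where
  "zeta_gen_rhs x =
     1/2 - (of_real pi * x / 2) * cot (of_real pi * x)
     - of_real pi * x *
       integral {0..1::real}
         (\<lambda>u. (sin (2 * of_real pi * x * of_real u) / sin (2 * of_real pi * x) - of_real u)
              * cot (of_real pi * of_real u))"

end

theory Submission
  imports Defs
begin

text \<open>Both sides equal \<open>-x (\<psi>(1 - x) + \<gamma>)\<close>.  On the left, expanding
  \<open>\<zeta>(k) = \<Sum>n\<ge>1. n\<^sup>-\<^sup>k\<close> and summing the geometric series in \<open>k\<close> first gives
  \<open>\<Sum>n\<ge>1. x\<^sup>2 / (n (n - x))\<close>, which is the series defining the digamma function at
  \<open>1 - x\<close>.  On the right, the Dirichlet-kernel identity
  \<open>cot (\<pi>u) = \<Sum>j<N. 2 sin (2\<pi>(j+1)u) + cos ((2N+1)\<pi>u) / sin (\<pi>u)\<close>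
  turns the integral into a series of elementary integrals plus a remainder which vanishes as
  \<open>N \<rightarrow> \<infinity>\<close> by the Riemann-Lebesgue lemma, because \<open>sin (2\<pi>xu) / sin (2\<pi>x) - u\<close> vanishes at
  \<open>u = 0, 1\<close> and so its quotient by \<open>sin (\<pi>u)\<close> is smooth.  The resulting partial fractions sum
  to \<open>x/2 (\<psi>(1-x) + \<psi>(1+x) + 2\<gamma>)\<close>, and the reflection formula
  \<open>\<psi>(1-x) - \<psi>(x) = \<pi> cot (\<pi>x)\<close> together with \<open>\<psi>(1+x) = \<psi>(x) + 1/x\<close> finishes the
  identity.  Holomorphy follows from that of \<open>\<psi>\<close>.\<close>

lemma sums_double_series_swap:
  fixes f :: "nat \<Rightarrow> nat \<Rightarrow> complex"
  assumes inner: "\<And>n. summable (\<lambda>k. norm (f n k))"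
    and outer: "summable (\<lambda>n. \<Sum>k. norm (f n k))"
  shows "(\<lambda>k. \<Sum>n. f n k) sums (\<Sum>n. \<Sum>k. f n k)"
proof -
  let ?g = "\<lambda>(n, k). f n k"
  have infsum_eq_suminf: "infsum h UNIV = suminf h" if "h summable_on UNIV" for h :: "nat \<Rightarrow> complex"
    using that by (metis has_sum_imp_sums has_sum_infsum sums_unique)
  have norm_inner: "((\<lambda>k. norm (f n k)) has_sum (\<Sum>k. norm (f n k))) UNIV" for n
    using norm_summable_imp_has_sum[OF _ summable_sums[OF inner[of n]]] inner[of n] by simp
  have "(\<lambda>p. norm (?g p)) summable_on UNIV \<times> UNIV"
  proof (rule Infinite_Sum.abs_summable_on_Sigma_iff[THEN iffD2], intro conjI ballI)
    show "(\<lambda>k. norm (?g (n, k))) summable_on UNIV" for n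
      using norm_inner[of n] by (auto simp: summable_on_def)
    have "infsum (\<lambda>k. norm (?g (n, k))) UNIV = (\<Sum>k. norm (f n k))" for n
      using norm_inner[of n] by (simp add: infsumI)
    moreover have "(\<lambda>n. norm (\<Sum>k. norm (f n k))) summable_on UNIV"
      using outer by (intro norm_summable_imp_summable_on) (simp add: suminf_nonneg inner)
    ultimately show "(\<lambda>n. norm (infsum (\<lambda>k. norm (?g (n, k))) UNIV)) summable_on UNIV"
      by simp
  qed
  then have sum_nk: "?g summable_on UNIV \<times> UNIV"
    by (rule abs_summable_summable)
  then have sum_kn: "(\<lambda>(k, n). f n k) summable_on UNIV \<times> UNIV"
    using summable_on_swap[of ?g UNIV UNIV] by (simp add: case_prod_unfold)
  have row: "(\<lambda>k. f n k) summable_on UNIV" for n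
    using summable_on_SigmaD1[of "\<lambda>n k. f n k", OF sum_nk] by simp
  have col: "(\<lambda>n. f n k) summable_on UNIV" for k
    using summable_on_SigmaD1[of "\<lambda>k n. f n k", OF sum_kn] by simp
  have "((\<lambda>k. infsum (\<lambda>n. f n k) UNIV) has_sum infsum (\<lambda>n. infsum (\<lambda>k. f n k) UNIV) UNIV) UNIV"
    using summable_on_SigmaD[OF sum_kn] col infsum_swap_banach[OF sum_nk]
    by (simp add: has_sum_infsum)
  moreover have "infsum (\<lambda>n. infsum (\<lambda>k. f n k) UNIV) UNIV = (\<Sum>n. \<Sum>k. f n k)"
    using summable_on_SigmaD[OF sum_nk] row by (simp add: infsum_eq_suminf)
  ultimately show ?thesis
    using col by (simp add: infsum_eq_suminf has_sum_imp_sums)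
qed

lemma geometric_sums_shift:
  fixes c :: "'a::{real_normed_field,banach}"
  assumes "norm c < 1"
  shows "(\<lambda>k. c ^ (k + m)) sums (c ^ m / (1 - c))"
  using sums_mult[OF geometric_sums[OF assms], of "c ^ m"]
  by (simp add: power_add mult.commute)

lemma summable_inverse_Suc_power:
  assumes "m \<ge> 2"
  shows "summable (\<lambda>n. 1 / of_nat (Suc n) ^ m :: 'a::{real_normed_div_algebra,banach})"
proof -
  have "summable (\<lambda>n. inverse (of_nat (Suc n) ^ m :: 'a))"
    using inverse_power_summable[OF assms] by (subst summable_Suc_iff)
  then show ?thesis
    by (simp add: divide_inverse)
qed

lemma zeta_of_nat: "zeta (of_nat m) = (\<Sum>n. 1 / of_nat (Suc n) ^ m)"
  unfolding zeta_def by (simp add: powr_nat' del: of_nat_Suc)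

lemma geometric_sums_div_Suc:
  fixes x :: "'a::{real_normed_field,banach}"
  assumes x: "norm x < real (Suc n)"
  shows "(\<lambda>k. (x / of_nat (Suc n)) ^ (k + 2)) sums (x\<^sup>2 / (of_nat (Suc n) * (of_nat (Suc n) - x)))"
proof -
  have "norm x \<noteq> norm (of_nat (Suc n) :: 'a)"
    using x by (simp only: norm_of_nat)
  then have nonzero: "of_nat (Suc n) - x \<noteq> 0"
    by force
  have "norm (x / of_nat (Suc n)) < 1"
    using x by (simp add: norm_divide divide_less_eq del: of_nat_Suc)
  from geometric_sums_shift[OF this, of 2]
  show ?thesis
    using nonzero by (simp add: field_simps power2_eq_square del: of_nat_Suc)
qed

lemma zeta_power_series_sums:
  fixes x :: complex
  assumes x: "norm x < 1"
  shows "(\<lambda>k. zeta (of_nat (k + 2)) * x ^ (k + 2))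
           sums (\<Sum>n. x\<^sup>2 / (of_nat (Suc n) * (of_nat (Suc n) - x)))"
proof -
  define f where "f n k = (x / of_nat (Suc n)) ^ (k + 2)" for n k
  define r where "r = norm x"
  have r: "0 \<le> r" "r < 1"
    using x by (auto simp: r_def)
  have "norm (f n k) = (r / real (Suc n)) ^ (k + 2)" for n k
    by (simp only: f_def r_def norm_power norm_divide norm_of_nat)
  then have norm_sums: "(\<lambda>k. norm (f n k)) sums (r\<^sup>2 / (real (Suc n) * (real (Suc n) - r)))" for n
    using geometric_sums_div_Suc[of r n] r by simp
  have norm_bound: "r\<^sup>2 / (real (Suc n) * (real (Suc n) - r)) \<le> r\<^sup>2 / (1 - r) * (1 / real (Suc n) ^ 2)" for n
  proof -
    have "real (Suc n) * (1 - r) \<le> real (Suc n) - r"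
      using r by (simp add: algebra_simps mult_le_cancel_left1)
    then have "r\<^sup>2 / (real (Suc n) * (real (Suc n) - r)) \<le> r\<^sup>2 / (real (Suc n) * (real (Suc n) * (1 - r)))"
      using r by (intro divide_left_mono mult_left_mono mult_pos_pos) auto
    then show ?thesis
      by (simp add: power2_eq_square mult_ac)
  qed
  have outer: "summable (\<lambda>n. \<Sum>k. norm (f n k))"
  proof (rule summable_comparison_test)
    show "summable (\<lambda>n. r\<^sup>2 / (1 - r) * (1 / real (Suc n) ^ 2))"
      by (intro summable_mult summable_inverse_Suc_power) simp
    show "\<exists>N. \<forall>n\<ge>N. norm (\<Sum>k. norm (f n k)) \<le> r\<^sup>2 / (1 - r) * (1 / real (Suc n) ^ 2)"
      using norm_bound r by (simp add: sums_unique[OF norm_sums, symmetric] del: of_nat_Suc)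
  qed
  have column: "(\<Sum>n. f n k) = zeta (of_nat (k + 2)) * x ^ (k + 2)" for k
  proof -
    have "(\<Sum>n. f n k) = (\<Sum>n. 1 / of_nat (Suc n) ^ (k + 2) * x ^ (k + 2))"
      by (simp add: f_def power_divide)
    also have "\<dots> = (\<Sum>n. 1 / of_nat (Suc n) ^ (k + 2)) * x ^ (k + 2)"
      by (intro suminf_mult2[symmetric] summable_inverse_Suc_power) simp
    finally show ?thesis
      by (simp only: zeta_of_nat)
  qed
  have row: "(\<Sum>k. f n k) = x\<^sup>2 / (of_nat (Suc n) * (of_nat (Suc n) - x))" for n
    unfolding f_def using x by (intro sums_unique[symmetric] geometric_sums_div_Suc) simp
  show ?thesis
    using sums_double_series_swap[OF sums_summable[OF norm_sums] outer] by (simp add: column row)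
qed

lemma sums_Digamma:
  fixes z :: "'a::{real_normed_field,banach}"
  assumes "z \<noteq> 0"
  shows "(\<lambda>k. inverse (of_nat (Suc k)) - inverse (z + of_nat k)) sums (Digamma z + euler_mascheroni)"
  using summable_Digamma[OF assms] by (simp add: Digamma_def summable_sums)

lemma Digamma_partial_fractions_sums:
  fixes x :: complex
  assumes x: "\<And>n. x \<noteq> of_nat (Suc n)"
  shows "(\<lambda>n. x\<^sup>2 / (of_nat (Suc n) * (of_nat (Suc n) - x)))
           sums (- x * (Digamma (1 - x) + euler_mascheroni))"
proof -
  have term_eq: "- x * (inverse (of_nat (Suc k)) - inverse (1 - x + of_nat k))
      = x\<^sup>2 / (of_nat (Suc k) * (of_nat (Suc k) - x))" for k
  proof -
    have "1 - x + of_nat k = of_nat (Suc k) - x"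
      by simp
    moreover have "of_nat (Suc k) - x \<noteq> 0"
      using x[of k] by simp
    ultimately show ?thesis
      by (simp add: field_simps power2_eq_square del: of_nat_Suc)
  qed
  have "(\<lambda>k. - x * (inverse (of_nat (Suc k)) - inverse (1 - x + of_nat k)))
      sums (- x * (Digamma (1 - x) + euler_mascheroni))"
    using x[of 0] by (intro sums_mult sums_Digamma) simp
  then show ?thesis
    by (simp only: term_eq)
qed

lemma Digamma_reflection_complex:
  fixes z :: complex
  assumes z: "z \<notin> \<int>"
  shows "Digamma (1 - z) - Digamma z = of_real pi * cot (of_real pi * z)"
proof -
  have "z \<notin> \<int>\<^sub>\<le>\<^sub>0" "1 - z \<notin> \<int>\<^sub>\<le>\<^sub>0"
    using z nonpos_Ints_subset_Ints by (auto dest: Ints_diff[OF Ints_1])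
  then have lhs: "((\<lambda>w. Gamma w * Gamma (1 - w)) has_field_derivative
      Gamma z * Digamma z * Gamma (1 - z) + Gamma (1 - z) * Digamma (1 - z) * - 1 * Gamma z) (at z)"
    by (intro DERIV_mult has_field_derivative_Gamma DERIV_chain2[where f = Gamma]
          derivative_eq_intros refl) auto
  have sin_nz: "sin (of_real pi * z) \<noteq> 0"
    using z sin_eq_0 by auto
  then have rhs: "((\<lambda>w. of_real pi / sin (of_real pi * w)) has_field_derivative
      of_real pi / sin (of_real pi * z) * - (of_real pi * cot (of_real pi * z))) (at z)"
    by (auto intro!: derivative_eq_intros simp: cot_def field_simps power2_eq_square)
  have "Gamma z * Gamma (1 - z) * (Digamma z - Digamma (1 - z))
      = Gamma z * Gamma (1 - z) * - (of_real pi * cot (of_real pi * z))"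
    using DERIV_unique[OF lhs rhs[folded Gamma_reflection_complex]] by (simp add: algebra_simps)
  then have "Digamma z - Digamma (1 - z) = - (of_real pi * cot (of_real pi * z))"
    by (rule mult_left_cancel[THEN iffD1, rotated]) (use sin_nz in \<open>simp add: Gamma_reflection_complex\<close>)
  then show ?thesis
    by (simp add: algebra_simps)
qed

lemma fundamental_theorem_of_calculus_of_real:
  fixes F f :: "complex \<Rightarrow> complex"
  assumes "\<And>t. t \<in> {a..b} \<Longrightarrow> (F has_field_derivative f (of_real t)) (at (of_real t))"
    and "a \<le> b"
  shows "((\<lambda>t. f (of_real t)) has_integral (F (of_real b) - F (of_real a))) {a..b}"
proof -
  have "((F \<circ> of_real) has_vector_derivative (1 * f (of_real t))) (at t within {a..b})"
    if "t \<in> {a..b}" for t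
  proof (rule field_vector_diff_chain_within)
    show "(of_real has_vector_derivative 1) (at t within {a..b})"
      using has_vector_derivative_of_real[of "\<lambda>x. x" 1 "at t within {a..b}"] by simp
    show "(F has_field_derivative f (of_real t)) (at (of_real t) within of_real ` {a..b})"
      using assms(1)[OF that] by (rule has_field_derivative_at_within)
  qed
  then have "((\<lambda>t. f (of_real t)) has_integral ((F \<circ> of_real) b - (F \<circ> of_real) a)) {a..b}"
    using assms(2) by (intro fundamental_theorem_of_calculus) (auto simp: o_def)
  then show ?thesis
    by simp
qed

lemma has_integral_sin_quotient_times_sin:
  fixes a b :: complex
  assumes sin_a: "sin a \<noteq> 0" and "a - b \<noteq> 0" "a + b \<noteq> 0" "b \<noteq> 0"
    and sin_b: "sin b = 0" and cos_b: "cos b = 1"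
  shows "((\<lambda>u. (sin (a * of_real u) / sin a - of_real u) * sin (b * of_real u))
           has_integral (b / (a\<^sup>2 - b\<^sup>2) + 1 / b)) {0..1}"
proof -
  define F where "F w = (sin ((a - b) * w) / (a - b) - sin ((a + b) * w) / (a + b)) / (2 * sin a)
      + (w * cos (b * w) / b - sin (b * w) / b\<^sup>2)" for w
  have sin_over: "((\<lambda>w. sin (c * w) / c) has_field_derivative cos (c * w)) (at w)"
    if "c \<noteq> 0" for c w
    using that by (auto intro!: derivative_eq_intros)
  have "((\<lambda>w. w * cos (b * w) / b - sin (b * w) / b\<^sup>2) has_field_derivative - w * sin (b * w)) (at w)"
    for w
    using \<open>b \<noteq> 0\<close> by (auto intro!: derivative_eq_intros simp: field_simps power2_eq_square)
  then have "(F has_field_derivative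
      (cos ((a - b) * w) - cos ((a + b) * w)) / (2 * sin a) + - w * sin (b * w)) (at w)" for w
    unfolding F_def using assms by (intro DERIV_add DERIV_cdivide DERIV_diff sin_over)
  moreover have "(cos ((a - b) * w) - cos ((a + b) * w)) / (2 * sin a) + - w * sin (b * w)
      = (sin (a * w) / sin a - w) * sin (b * w)" for w
    using sin_a by (simp add: left_diff_distrib distrib_right cos_diff cos_add field_simps)
  ultimately have "(F has_field_derivative (sin (a * w) / sin a - w) * sin (b * w)) (at w)" for w
    by (simp only:)
  then have ftc: "((\<lambda>u. (sin (a * of_real u) / sin a - of_real u) * sin (b * of_real u))
      has_integral (F 1 - F 0)) {0..1}"
    using fundamental_theorem_of_calculus_of_real[of 0 1 F "\<lambda>w. (sin (a * w) / sin a - w) * sin (b * w)"]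
    by simp
  have "sin (a - b) = sin a" "sin (a + b) = sin a"
    by (simp_all add: sin_diff sin_add sin_b cos_b)
  moreover have "a * a - b * b \<noteq> 0"
    using assms by (metis mult_eq_0_iff square_diff_square_factored)
  ultimately have "F 1 - F 0 = b / (a\<^sup>2 - b\<^sup>2) + 1 / b"
    using assms by (simp add: F_def sin_b cos_b field_simps power2_eq_square)
  with ftc show ?thesis
    by simp
qed

lemma cos_sub_cos_odd_multiple:
  fixes u :: real
  shows "cos (pi * u) - cos (real (2 * N + 1) * pi * u)
           = sin (pi * u) * (\<Sum>j<N. 2 * sin (2 * pi * real (Suc j) * u))"
proof (induction N)
  case (Suc N)
  have "real (2 * N + 1) * pi * u = 2 * pi * real (Suc N) * u - pi * u"
    and "real (2 * Suc N + 1) * pi * u = 2 * pi * real (Suc N) * u + pi * u"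
    by (simp_all add: algebra_simps)
  then have "cos (real (2 * N + 1) * pi * u) - cos (real (2 * Suc N + 1) * pi * u)
      = 2 * sin (pi * u) * sin (2 * pi * real (Suc N) * u)"
    by (simp only: cos_diff cos_add) simp
  then show ?case
    using Suc by (simp add: algebra_simps)
qed simp

lemma integral_mult_cos_by_parts:
  fixes g g' :: "real \<Rightarrow> complex" and c :: real
  assumes g: "continuous_on {0..1} g" and g': "continuous_on {0..1} g'"
    and deriv: "\<And>t. t \<in> {0<..<1} \<Longrightarrow> (g has_vector_derivative g' t) (at t)"
    and c: "c \<noteq> 0" "sin c = 0"
  shows "integral {0..1} (\<lambda>t. g t * of_real (cos (c * t)))
           = - integral {0..1} (\<lambda>t. of_real (sin (c * t) / c) * g' t)"
proof -
  define S where "S t = (of_real (sin (c * t) / c) :: complex)" for t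
  have S: "continuous_on {0..1} S"
    unfolding S_def using c by (intro continuous_intros) auto
  have "(S has_vector_derivative of_real (cos (c * t))) (at t)" for t
    unfolding S_def using c
    by (auto intro!: has_vector_derivative_of_real derivative_eq_intros)
  moreover have "(\<lambda>t. S t * g' t) integrable_on {0..1}"
    by (intro integrable_continuous_interval continuous_intros S g')
  moreover have "S 0 = 0" "S 1 = 0"
    using c by (simp_all add: S_def)
  ultimately have "((\<lambda>t. of_real (cos (c * t)) * g t)
      has_integral - integral {0..1} (\<lambda>t. S t * g' t)) {0..1}"
    by (intro integration_by_parts_interior[OF bounded_bilinear_mult, of 0 1 S g])
       (auto intro: S g deriv simp: integrable_integral)
  then show ?thesis
    by (simp add: S_def integral_unique mult.commute)
qed

lemma integral_mult_cos_odd_multiple_tendsto_0: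
  fixes g g' :: "real \<Rightarrow> complex"
  assumes g: "continuous_on {0..1} g" and g': "continuous_on {0..1} g'"
    and deriv: "\<And>t. t \<in> {0<..<1} \<Longrightarrow> (g has_vector_derivative g' t) (at t)"
  shows "(\<lambda>N. integral {0..1} (\<lambda>t. g t * of_real (cos (real (2 * N + 1) * pi * t)))) \<longlonglongrightarrow> 0"
proof -
  obtain B where B: "B > 0" "\<And>t. t \<in> {0..1} \<Longrightarrow> norm (g' t) \<le> B"
    using compact_imp_bounded[OF compact_continuous_image[OF g' compact_Icc]]
    by (auto simp: bounded_pos)
  have "(\<lambda>N. B / pi * inverse (real (Suc N))) \<longlonglongrightarrow> 0"
    by (intro tendsto_mult_right_zero LIMSEQ_inverse_real_of_nat)
  moreover have "\<forall>\<^sub>F N in sequentially.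
      norm (integral {0..1} (\<lambda>t. g t * of_real (cos (real (2 * N + 1) * pi * t))))
        \<le> B / pi * inverse (real (Suc N))"
  proof (intro always_eventually allI)
    fix N :: nat
    define c where "c = real (2 * N + 1) * pi"
    have c: "c > 0" "sin c = 0"
      unfolding c_def using sin_npi[of "2 * N + 1"] by (simp_all del: of_nat_Suc)
    have "norm (integral {0..1} (\<lambda>t. of_real (sin (c * t) / c) * g' t)) \<le> B / c * (1 - 0)"
    proof (rule integral_bound)
      show "continuous_on {0..1} (\<lambda>t. of_real (sin (c * t) / c) * g' t)"
        using c by (intro continuous_intros g') auto
      fix t :: real
      assume "t \<in> {0..1}"
      moreover have "norm (of_real (sin (c * t) / c) :: complex) \<le> 1 / c"
        unfolding norm_of_real using c abs_sin_le_one[of "c * t"]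
        by (simp add: divide_right_mono del: of_real_divide)
      ultimately have "norm (of_real (sin (c * t) / c) :: complex) * norm (g' t) \<le> 1 / c * B"
        using B c by (intro mult_mono) auto
      then show "norm (of_real (sin (c * t) / c) * g' t) \<le> B / c"
        by (simp only: norm_mult) simp
    qed simp
    also have "B / c \<le> B / (real (Suc N) * pi)"
      using B(1) by (intro divide_left_mono mult_right_mono) (auto simp: c_def)
    also have "\<dots> = B / pi * inverse (real (Suc N))"
      by (simp add: field_simps)
    finally show "norm (integral {0..1} (\<lambda>t. g t * of_real (cos (real (2 * N + 1) * pi * t))))
        \<le> B / pi * inverse (real (Suc N))"
      using integral_mult_cos_by_parts[OF g g' deriv] c by (simp add: c_def)
  qed
  ultimately show ?thesis
    by (rule Lim_null_comparison[rotated])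
qed

text \<open>The ball is a neighbourhood of \<open>[0, 1]\<close> whose only integer points are \<open>0\<close> and \<open>1\<close>,
  so the zeros of \<open>sin (\<pi>w)\<close> in it are removable singularities of \<open>G w / sin (\<pi>w)\<close>.\<close>

lemma holomorphic_on_div_sin_pi:
  fixes G G' :: "complex \<Rightarrow> complex"
  assumes deriv: "\<And>w. (G has_field_derivative G' w) (at w)" and G: "G 0 = 0" "G 1 = 0"
  defines "H \<equiv> \<lambda>w. if w = 0 \<or> w = 1 then G' w / (of_real pi * cos (of_real pi * w))
                    else G w / sin (of_real pi * w)"
  shows "H holomorphic_on ball (1/2) (3/4)"
proof (rule no_isolated_singularity'[where K = "{0, 1}"])
  have "sin (of_real pi * w) \<noteq> 0" if "w \<in> ball (1/2) (3/4) - {0, 1}" for w :: complex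
  proof
    assume "sin (of_real pi * w) = 0"
    then obtain n :: int where "of_real pi * w = of_real (of_int n * pi)"
      using sin_eq_0 by blast
    then have n: "w = of_int n"
      by (simp add: mult.commute)
    then have "1/2 - w = of_real (1/2 - real_of_int n)"
      by simp
    then have "\<bar>1/2 - real_of_int n\<bar> < 3/4"
      using that by (metis DiffD1 mem_ball dist_norm norm_of_real)
    then have "n = 0 \<or> n = 1"
      by linarith
    then show False
      using that n by auto
  qed
  moreover have "G holomorphic_on A" for A
    using deriv by (auto simp: holomorphic_on_def field_differentiable_def intro: has_field_derivative_at_within)
  ultimately have "(\<lambda>w. G w / sin (of_real pi * w)) holomorphic_on ball (1/2) (3/4) - {0, 1}"
    by (intro holomorphic_intros) auto
  then show "H holomorphic_on ball (1/2) (3/4) - {0, 1}"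
    by (rule holomorphic_transform) (auto simp: H_def)
  show "(H \<longlongrightarrow> H z) (at z within ball (1/2) (3/4))" if z: "z \<in> {0, 1}" for z
  proof -
    have sin_deriv: "((\<lambda>w. sin (of_real pi * w)) has_field_derivative
        of_real pi * cos (of_real pi * z)) (at z)"
      by (auto intro!: derivative_eq_intros)
    have "((\<lambda>w. G w / sin (of_real pi * w)) \<longlongrightarrow> H z) (at z)"
      by (rule lhopital_complex_simple[OF deriv sin_deriv])
         (use z G in \<open>auto simp: H_def simp flip: of_real_mult\<close>)
    moreover have "eventually (\<lambda>w. G w / sin (of_real pi * w) = H w) (at z)"
      unfolding eventually_at using z
      by (intro exI[of _ "1/2"]) (auto simp: H_def dist_norm)
    ultimately have "(H \<longlongrightarrow> H z) (at z)"
      by (rule Lim_transform_eventually)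
    then show ?thesis
      by (rule tendsto_within_subset) simp
  qed
qed auto

lemma holomorphic_on_restrict_real_interval:
  fixes H :: "complex \<Rightarrow> complex"
  assumes H: "H holomorphic_on S" and S: "open S" "of_real ` {a..b} \<subseteq> S"
  shows "continuous_on {a..b} (\<lambda>t. H (of_real t))"
    and "continuous_on {a..b} (\<lambda>t. deriv H (of_real t))"
    and "\<And>t. t \<in> {a..b} \<Longrightarrow> ((\<lambda>t. H (of_real t)) has_vector_derivative deriv H (of_real t)) (at t)"
proof -
  have cont: "continuous_on {a..b} (\<lambda>t. F (of_real t))" if "F holomorphic_on S" for F
    using continuous_on_compose2[OF holomorphic_on_imp_continuous_on[OF that] continuous_on_of_real S(2)]
    by simp
  show "continuous_on {a..b} (\<lambda>t. H (of_real t))"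
    using cont[OF H] .
  show "continuous_on {a..b} (\<lambda>t. deriv H (of_real t))"
    using cont[OF holomorphic_deriv[OF H S(1)]] .
  fix t
  assume "t \<in> {a..b}"
  then have "(H has_field_derivative deriv H (of_real t)) (at (of_real t))"
    using H S by (intro holomorphic_derivI[of _ S]) auto
  then have "((H \<circ> of_real) has_vector_derivative (1 * deriv H (of_real t))) (at t)"
    by (intro field_vector_diff_chain_at has_vector_derivative_of_real[of "\<lambda>x. x" 1, simplified])
  then show "((\<lambda>t. H (of_real t)) has_vector_derivative deriv H (of_real t)) (at t)"
    by (simp add: o_def)
qed

lemma div_sin_pi_C1_on_unit_interval:
  fixes G G' :: "complex \<Rightarrow> complex"
  assumes "\<And>w. (G has_field_derivative G' w) (at w)" and "G 0 = 0" "G 1 = 0"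
  defines "H \<equiv> \<lambda>w. if w = 0 \<or> w = 1 then G' w / (of_real pi * cos (of_real pi * w))
                    else G w / sin (of_real pi * w)"
  shows "continuous_on {0..1} (\<lambda>t. H (of_real t))"
    and "continuous_on {0..1} (\<lambda>t. deriv H (of_real t))"
    and "\<And>t. t \<in> {0<..<1} \<Longrightarrow> ((\<lambda>t. H (of_real t)) has_vector_derivative deriv H (of_real t)) (at t)"
proof -
  have "H holomorphic_on ball (1/2) (3/4)"
    unfolding H_def using assms(1-3) by (rule holomorphic_on_div_sin_pi)
  moreover have "of_real ` {0..1} \<subseteq> ball (1/2 :: complex) (3/4)"
  proof
    fix z :: complex
    assume "z \<in> of_real ` {0..1::real}"
    then obtain t where "t \<in> {0..1}" "z = of_real t"
      by auto
    moreover have "1/2 - (of_real t :: complex) = of_real (1/2 - t)"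
      by simp
    ultimately show "z \<in> ball (1/2) (3/4)"
      by (auto simp: dist_norm abs_if simp del: of_real_diff)
  qed
  ultimately show "continuous_on {0..1} (\<lambda>t. H (of_real t))"
    and "continuous_on {0..1} (\<lambda>t. deriv H (of_real t))"
    and "\<And>t. t \<in> {0<..<1} \<Longrightarrow> ((\<lambda>t. H (of_real t)) has_vector_derivative deriv H (of_real t)) (at t)"
    using holomorphic_on_restrict_real_interval[of H _ 0 1] by auto
qed

lemma cot_pi_of_real_eq_sum_sin:
  fixes u :: real
  assumes "0 < u" "u < 1"
  shows "cot (of_real pi * of_real u :: complex)
           = (\<Sum>j<N. 2 * sin (2 * of_real pi * of_nat (Suc j) * of_real u))
             + of_real (cos (real (2 * N + 1) * pi * u)) / sin (of_real pi * of_real u)"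
proof -
  have sin_pi: "sin (of_real pi * of_real u :: complex) = of_real (sin (pi * u))"
    and cos_pi: "cos (of_real pi * of_real u :: complex) = of_real (cos (pi * u))"
    by (simp_all only: sin_of_real cos_of_real flip: of_real_mult)
  have "cot (of_real pi * of_real u :: complex) = of_real (cos (pi * u) / sin (pi * u))"
    by (simp add: cot_def sin_pi cos_pi)
  also have "cos (pi * u) / sin (pi * u)
      = (\<Sum>j<N. 2 * sin (2 * pi * real (Suc j) * u)) + cos (real (2 * N + 1) * pi * u) / sin (pi * u)"
    using cos_sub_cos_odd_multiple[of u N] sin_gt_zero[of "pi * u"] assms
    by (simp add: field_simps)
  also have "complex_of_real \<dots> = (\<Sum>j<N. 2 * sin (2 * of_real pi * of_nat (Suc j) * of_real u))
      + of_real (cos (real (2 * N + 1) * pi * u)) / sin (of_real pi * of_real u)"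
  proof -
    have "sin (2 * of_real pi * of_nat (Suc j) * of_real u :: complex)
        = of_real (sin (2 * pi * real (Suc j) * u))" for j
      using sin_of_real[of "2 * pi * real (Suc j) * u"] by simp
    then show ?thesis
      by (simp add: sin_pi)
  qed
  finally show ?thesis .
qed

lemma has_integral_cot_kernel_term:
  fixes a :: complex and j :: nat
  assumes sin_a: "sin a \<noteq> 0"
  defines "b \<equiv> 2 * of_real pi * of_nat (Suc j) :: complex"
  shows "((\<lambda>u. (sin (a * of_real u) / sin a - of_real u) * (2 * sin (b * of_real u)))
           has_integral 2 * (b / (a\<^sup>2 - b\<^sup>2) + 1 / b)) {0..1}"
proof -
  have "b = of_real (2 * pi * real (Suc j))"
    by (simp add: b_def)
  then have b: "sin b = 0" "cos b = 1"
    using sin_npi[of "2 * Suc j"] cos_npi[of "2 * Suc j"]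
    by (simp_all only: sin_of_real cos_of_real) (simp_all add: algebra_simps)
  then have "a - b \<noteq> 0" "a + b \<noteq> 0"
    using sin_a by (auto simp: add_eq_0_iff)
  moreover have "b \<noteq> 0"
    by (simp add: b_def del: of_nat_Suc)
  ultimately have "((\<lambda>u. (sin (a * of_real u) / sin a - of_real u) * sin (b * of_real u))
      has_integral (b / (a\<^sup>2 - b\<^sup>2) + 1 / b)) {0..1}"
    using b by (intro has_integral_sin_quotient_times_sin sin_a)
  from has_integral_mult_right[OF this, of 2] show ?thesis
    by (simp add: mult_ac)
qed

lemma integral_cot_kernel_sums:
  fixes a :: complex
  assumes sin_a: "sin a \<noteq> 0"
  defines "b \<equiv> \<lambda>j. 2 * of_real pi * of_nat (Suc j) :: complex"
  shows "(\<lambda>j. 2 * (b j / (a\<^sup>2 - (b j)\<^sup>2) + 1 / b j))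
           sums integral {0..1} (\<lambda>u. (sin (a * of_real u) / sin a - of_real u) * cot (of_real pi * of_real u))"
proof -
  define G where "G w = sin (a * w) / sin a - w" for w
  define G' where "G' w = a * cos (a * w) / sin a - 1" for w
  define H where "H = (\<lambda>w. if w = 0 \<or> w = 1 then G' w / (of_real pi * cos (of_real pi * w))
      else G w / sin (of_real pi * w))"
  define f where "f u = G (of_real u) * cot (of_real pi * of_real u)" for u :: real
  define R where "R N = integral {0..1} (\<lambda>t. H (of_real t) * of_real (cos (real (2 * N + 1) * pi * t)))"
    for N
  have G_deriv: "(G has_field_derivative G' w) (at w)" for w
    unfolding G_def G'_def using sin_a by (auto intro!: derivative_eq_intros)
  have G_zeros: "G 0 = 0" "G 1 = 0"
    using sin_a by (simp_all add: G_def)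
  have H_C1: "continuous_on {0..1} (\<lambda>t. H (of_real t))"
      "continuous_on {0..1} (\<lambda>t. deriv H (of_real t))"
      "\<And>t. t \<in> {0<..<1} \<Longrightarrow> ((\<lambda>t. H (of_real t)) has_vector_derivative deriv H (of_real t)) (at t)"
    unfolding H_def using div_sin_pi_C1_on_unit_interval[OF G_deriv G_zeros] by blast+
  have term_integral: "((\<lambda>u. G (of_real u) * (2 * sin (b j * of_real u)))
      has_integral 2 * (b j / (a\<^sup>2 - (b j)\<^sup>2) + 1 / b j)) {0..1}" for j
    unfolding G_def b_def by (rule has_integral_cot_kernel_term[OF sin_a])
  have expansion: "f u = (\<Sum>j<N. G (of_real u) * (2 * sin (b j * of_real u)))
      + H (of_real u) * of_real (cos (real (2 * N + 1) * pi * u))"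
    if "u \<in> {0..1} - {0, 1}" for u N
    using that cot_pi_of_real_eq_sum_sin[of u N]
    by (simp add: f_def H_def b_def sum_distrib_left distrib_left)
  have "((\<lambda>u. (\<Sum>j<N. G (of_real u) * (2 * sin (b j * of_real u)))
        + H (of_real u) * of_real (cos (real (2 * N + 1) * pi * u)))
      has_integral ((\<Sum>j<N. 2 * (b j / (a\<^sup>2 - (b j)\<^sup>2) + 1 / b j)) + R N)) {0..1}" for N
    unfolding R_def
    by (intro has_integral_add has_integral_sum term_integral integrable_integral
        integrable_continuous_interval continuous_intros H_C1 finite_lessThan)
  then have partial_sums: "(f has_integral ((\<Sum>j<N. 2 * (b j / (a\<^sup>2 - (b j)\<^sup>2) + 1 / b j)) + R N)) {0..1}"
    for N
    using has_integral_spike_finite[of "{0, 1}" "{0..1}" f, OF _ expansion[where N = N]] by simp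
  have "(\<Sum>j<N. 2 * (b j / (a\<^sup>2 - (b j)\<^sup>2) + 1 / b j)) = integral {0..1} f - R N" for N
    using integral_unique[OF partial_sums[of N]] by (simp only: eq_diff_eq)
  moreover have "R \<longlonglongrightarrow> 0"
    unfolding R_def by (rule integral_mult_cos_odd_multiple_tendsto_0[OF H_C1])
  then have "(\<lambda>N. integral {0..1} f - R N) \<longlonglongrightarrow> integral {0..1} f"
    using tendsto_diff[OF tendsto_const] by fastforce
  ultimately have "(\<lambda>j. 2 * (b j / (a\<^sup>2 - (b j)\<^sup>2) + 1 / b j)) sums integral {0..1} f"
    by (simp only: sums_def)
  then show ?thesis
    by (simp add: f_def[abs_def] G_def)
qed

lemma cot_kernel_partial_fraction:
  fixes x n p :: complex
  assumes n: "n \<noteq> 0" and p: "p \<noteq> 0" and nx: "n - x \<noteq> 0" "n + x \<noteq> 0"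
  shows "p * x * (2 * (2 * p * n / ((2 * p * x)\<^sup>2 - (2 * p * n)\<^sup>2) + 1 / (2 * p * n)))
       = x / 2 * ((inverse n - inverse (n - x)) + (inverse n - inverse (n + x)))"
proof -
  define q where "q = (n - x) * (n + x)"
  have q: "q \<noteq> 0"
    using nx by (simp add: q_def)
  have "(2 * p * x)\<^sup>2 - (2 * p * n)\<^sup>2 = - (4 * p\<^sup>2) * q"
    by (simp add: q_def algebra_simps power2_eq_square)
  moreover have "2 * p * n / (- (4 * p\<^sup>2) * q) = - n / (2 * p * q)"
    using p q by (simp add: field_simps power2_eq_square)
  ultimately have "p * x * (2 * (2 * p * n / ((2 * p * x)\<^sup>2 - (2 * p * n)\<^sup>2) + 1 / (2 * p * n)))
      = p * x * (2 * (- n / (2 * p * q) + 1 / (2 * p * n)))"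
    by simp
  also have "\<dots> = x / 2 * (2 / n - 2 * n / q)"
    using n p q by (simp add: field_simps)
  also have "2 * n / q = inverse (n - x) + inverse (n + x)"
    using nx by (simp add: q_def field_simps)
  finally show ?thesis
    by (simp add: inverse_eq_divide algebra_simps)
qed

lemma integral_cot_kernel_eq_Digamma:
  fixes x :: complex
  assumes x: "2 * x \<notin> \<int>"
  shows "of_real pi * x * integral {0..1}
           (\<lambda>u. (sin (2 * of_real pi * x * of_real u) / sin (2 * of_real pi * x) - of_real u)
                * cot (of_real pi * of_real u))
         = x / 2 * ((Digamma (1 - x) + euler_mascheroni) + (Digamma (1 + x) + euler_mascheroni))"
proof -
  have "x \<notin> \<int>"
    using x Ints_mult[of 2 x] by auto
  then have x_nat: "of_nat (Suc j) - x \<noteq> 0" "of_nat (Suc j) + x \<noteq> 0" for j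
    by (metis Ints_of_nat eq_iff_diff_eq_0, metis Ints_minus Ints_of_nat add_eq_0_iff)
  have "sin (2 * of_real pi * x) \<noteq> 0"
  proof
    assume "sin (2 * of_real pi * x) = 0"
    then obtain m :: int where "of_real pi * (2 * x) = of_real pi * of_int m"
      using sin_eq_0 by (auto simp: mult_ac)
    then show False
      using x by simp
  qed
  then have "(\<lambda>j. of_real pi * x * (2 * (2 * of_real pi * of_nat (Suc j)
        / ((2 * of_real pi * x)\<^sup>2 - (2 * of_real pi * of_nat (Suc j))\<^sup>2)
        + 1 / (2 * of_real pi * of_nat (Suc j)))))
      sums (of_real pi * x * integral {0..1}
        (\<lambda>u. (sin (2 * of_real pi * x * of_real u) / sin (2 * of_real pi * x) - of_real u)
           * cot (of_real pi * of_real u)))"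
    by (intro sums_mult integral_cot_kernel_sums)
  also have "(\<lambda>j. of_real pi * x * (2 * (2 * of_real pi * of_nat (Suc j)
        / ((2 * of_real pi * x)\<^sup>2 - (2 * of_real pi * of_nat (Suc j))\<^sup>2)
        + 1 / (2 * of_real pi * of_nat (Suc j)))))
      = (\<lambda>j. x / 2 * ((inverse (of_nat (Suc j)) - inverse (1 - x + of_nat j))
          + (inverse (of_nat (Suc j)) - inverse (1 + x + of_nat j))))"
  proof
    fix j
    have "1 - x + of_nat j = of_nat (Suc j) - x" "1 + x + of_nat j = of_nat (Suc j) + x"
      by simp_all
    then show "of_real pi * x * (2 * (2 * of_real pi * of_nat (Suc j)
        / ((2 * of_real pi * x)\<^sup>2 - (2 * of_real pi * of_nat (Suc j))\<^sup>2)
        + 1 / (2 * of_real pi * of_nat (Suc j))))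
      = x / 2 * ((inverse (of_nat (Suc j)) - inverse (1 - x + of_nat j))
          + (inverse (of_nat (Suc j)) - inverse (1 + x + of_nat j)))"
      using x_nat[of j] by (simp only:) (rule cot_kernel_partial_fraction, simp_all del: of_nat_Suc)
  qed
  finally show ?thesis
    by (rule sums_unique2) (use x_nat[of 0] in \<open>intro sums_mult sums_add sums_Digamma; simp\<close>)
qed

lemma zeta_gen_rhs_eq_Digamma:
  fixes x :: complex
  assumes x: "2 * x \<notin> \<int>"
  shows "zeta_gen_rhs x = - x * (Digamma (1 - x) + euler_mascheroni)"
proof -
  have "x \<notin> \<int>"
    using x Ints_mult[of 2 x] by auto
  then have "x \<noteq> 0" and "Digamma (1 - x) - Digamma x = of_real pi * cot (of_real pi * x)"
    by (auto intro: Digamma_reflection_complex)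
  moreover have "Digamma (1 + x) = Digamma x + 1 / x"
    using Digamma_plus1[OF \<open>x \<noteq> 0\<close>] by (simp add: add.commute)
  ultimately show ?thesis
    unfolding zeta_gen_rhs_def integral_cot_kernel_eq_Digamma[OF x] by (simp add: field_simps)
qed

theorem mainTheorem8:
  shows "(\<forall>x::complex. norm x < 1 \<and> 2 * x \<notin> \<int> \<longrightarrow>
           (\<lambda>k. zeta (of_nat (k + 2)) * x ^ (k + 2)) sums zeta_gen_rhs x)
         \<and> zeta_gen_rhs holomorphic_on {x::complex. 2 * x \<notin> \<int>}"
proof (intro conjI allI impI)
  fix x :: complex
  assume "norm x < 1 \<and> 2 * x \<notin> \<int>"
  then have x: "norm x < 1" "2 * x \<notin> \<int>"
    by auto
  then have "x \<noteq> of_nat (Suc n)" for n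
    using Ints_mult[of 2 x] by (auto simp del: of_nat_Suc)
  then have "(\<lambda>n. x\<^sup>2 / (of_nat (Suc n) * (of_nat (Suc n) - x))) sums zeta_gen_rhs x"
    unfolding zeta_gen_rhs_eq_Digamma[OF x(2)] by (rule Digamma_partial_fractions_sums)
  with zeta_power_series_sums[OF x(1)]
  show "(\<lambda>k. zeta (of_nat (k + 2)) * x ^ (k + 2)) sums zeta_gen_rhs x"
    by (simp add: sums_iff)
next
  have "1 - x \<notin> \<int>\<^sub>\<le>\<^sub>0" if "2 * x \<notin> \<int>" for x :: complex
    using that nonpos_Ints_subset_Ints Ints_diff[OF Ints_1, of "1 - x"] Ints_mult[of 2 x] by auto
  then have "(\<lambda>x. - x * (Digamma (1 - x) + euler_mascheroni)) holomorphic_on {x. 2 * x \<notin> \<int>}"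
    by (intro analytic_imp_holomorphic analytic_intros) auto
  then show "zeta_gen_rhs holomorphic_on {x::complex. 2 * x \<notin> \<int>}"
    by (rule holomorphic_transform) (simp add: zeta_gen_rhs_eq_Digamma)
qed

end
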